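(* Let $y$ be the solution of the problem $\varepsilon^2 y''(x)=f(x,y)$ on $(0,1)$, $y(0)=y(1)=0$, with $f$ and the Shishkin mesh $\{x_i\}_{i=0}^N$ as described in the context, and let $G$ be the discrete operator defined in the context. Assume that $\varepsilon\leqslant C_0/N$ for some constant $C_0>0$. Then there is a constant $C>0$ independent of $N$ and $\varepsilon$ such that $$|(Gy)_{N/4}|\leqslant\frac{C}{N},$$ where $(Gy)_{N/4}$ is the component with index $N/4$ (corresponding to the mesh point $x_{N/4}=\lambda$) of $G$ applied to the vector $(y(x_0),\ldots,y(x_N))^T$.
   Context: Problem: $\varepsilon^2y''(x)=f(x,y)$ on $(0,1)$, $y(0)=y(1)=0$, where $\varepsilon>0$ is a small parameter, $f\in C^k([0,1]\times\mathbb{R})$ for some $k\geq 2$, and $f_y=\partial f/\partial y\geq m>0$ on $[0,1]\times\mathbb{R}$ for a constant $m$; this problem has a unique solution $y$. Shishkin mesh: $N$ is a positive integer divisible by 4, $\lambda=\min\{1/4,\,2\varepsilon\ln N/\sqrt{m}\}$, and it is assumed that $\lambda=2\varepsilon\ln N/\sqrt{m}$. The mesh $0=x_0<x_1<\cdots<x_N=1$ is equidistant on each of $[0,\lambda]$ (with $N/4$ subintervals), $[\lambda,1-\lambda]$ (with $N/2$ subintervals) and $[1-\lambda,1]$ (with $N/4$ subintervals); thus $x_{N/4}=\lambda$, $x_{3N/4}=1-\lambda$, subintervals in $[0,\lambda]\cup[1-\lambda,1]$ have length $4\lambda/N$ and those in $[\lambda,1-\lambda]$ have length $2(1-2\lambda)/N$.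 Scheme: $\gamma$ is a constant with $\gamma\geq f_y$, and $\beta=\sqrt{\gamma}/\varepsilon$. For $i=1,\ldots,N$ let $\ell_i=x_i-x_{i-1}$, $d_i=\beta/\tanh(\beta\ell_i)$, $a_i=\beta/\sinh(\beta\ell_i)$, $\Delta d_i=d_i-a_i$. For $v=(v_0,\ldots,v_N)^T\in\mathbb{R}^{N+1}$ write $f_j=f(x_j,v_j)$ and define $Gv\in\mathbb{R}^{N+1}$ by $(Gv)_0=v_0$, $(Gv)_N=v_N$ and, for $i=1,\ldots,N-1$, $$(Gv)_i=\frac{\gamma}{\Delta d_i+\Delta d_{i+1}}\Big[(3a_i+d_i+\Delta d_{i+1})(v_{i-1}-v_i)-(3a_{i+1}+d_{i+1}+\Delta d_i)(v_i-v_{i+1})-\frac{f_{i-1}+2f_i+f_{i+1}}{\gamma}(\Delta d_i+\Delta d_{i+1})\Big].$$ *)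

theory Defs
  imports "HOL-Analysis.Analysis"
begin

text \<open>C^k regularity of a function of two real variables on a set S (derivatives taken
  within S, so that closed domains like [0,1] x R are allowed): g is C^0 if continuous on S,
  and C^(k+1) if it has on S a (Frechet) derivative whose two partial derivatives are C^k on S.\<close>
fun Ck_on :: "nat \<Rightarrow> (real \<times> real) set \<Rightarrow> (real \<times> real \<Rightarrow> real) \<Rightarrow> bool" where
  "Ck_on 0 S g = continuous_on S g"
| "Ck_on (Suc k) S g =
     (\<exists>g1 g2. (\<forall>p\<in>S. (g has_derivative (\<lambda>h. g1 p * fst h + g2 p * snd h)) (at p within S))
             \<and> Ck_on k S g1 \<and> Ck_on k S g2)"

definition is_solution :: "real \<Rightarrow> (real \<times> real \<Rightarrow> real) \<Rightarrow> (real \<Rightarrow> real) \<Rightarrow> bool" where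
  "is_solution \<epsilon> f y \<longleftrightarrow>
     continuous_on {0..1} y \<and> y 0 = 0 \<and> y 1 = 0 \<and>
     (\<exists>y' y''. \<forall>x\<in>{0<..<1}. (y has_real_derivative y' x) (at x) \<and>
                              (y' has_real_derivative y'' x) (at x) \<and>
                              \<epsilon>\<^sup>2 * y'' x = f (x, y x))"

definition shishkin_lambda :: "real \<Rightarrow> real \<Rightarrow> nat \<Rightarrow> real" where
  "shishkin_lambda \<epsilon> m N = 2 * \<epsilon> * ln (real N) / sqrt m"

definition shishkin_mesh :: "real \<Rightarrow> real \<Rightarrow> nat \<Rightarrow> nat \<Rightarrow> real" where
  "shishkin_mesh \<epsilon> m N i =
     (let lam = shishkin_lambda \<epsilon> m N in
      if i \<le> N div 4 then real i * (4 * lam / real N)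
      else if i \<le> 3 * N div 4 then lam + real (i - N div 4) * (2 * (1 - 2 * lam) / real N)
      else (1 - lam) + real (i - 3 * N div 4) * (4 * lam / real N))"

definition G_op :: "real \<Rightarrow> real \<Rightarrow> (real \<times> real \<Rightarrow> real) \<Rightarrow> nat \<Rightarrow> (nat \<Rightarrow> real)
                      \<Rightarrow> (nat \<Rightarrow> real) \<Rightarrow> nat \<Rightarrow> real" where
  "G_op \<gamma> \<epsilon> f N xs v i =
     (let \<beta> = sqrt \<gamma> / \<epsilon>;
          len = (\<lambda>j. xs j - xs (j - 1));
          d = (\<lambda>j. \<beta> / tanh (\<beta> * len j));
          a = (\<lambda>j. \<beta> / sinh (\<beta> * len j));
          dd = (\<lambda>j. d j - a j);
          fv = (\<lambda>j. f (xs j, v j))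
      in if i = 0 then v 0
         else if i = N then v N
         else \<gamma> / (dd i + dd (i + 1)) *
                ((3 * a i + d i + dd (i + 1)) * (v (i - 1) - v i)
                 - (3 * a (i + 1) + d (i + 1) + dd i) * (v i - v (i + 1))
                 - (fv (i - 1) + 2 * fv i + fv (i + 1)) / \<gamma> * (dd i + dd (i + 1))))"

end

theory Submission
  imports Defs
begin

(*
  At the transition point l = x_{N/4} the residual of the scheme is controlled by one-sided
  slope bounds for y at l. On each of the two mesh intervals adjacent to l, \<epsilon>^2 y'' - \<gamma> y stays
  within W of its value at l, where W is the oscillation of f(x, y(x)) - \<gamma> y(x) over
  [x_{N/4-1}, x_{N/4+1}]; comparing y with the solutions of \<epsilon>^2 u'' - \<gamma> u = const having the
  same boundary values (maximum principle) bounds y'(l) from above and below by the exact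
  two-point formulas in which the coefficients a_i, d_i of the scheme arise. Eliminating y'(l)
  gives |(Gy)_{N/4}| <= 6 W.

  The oscillation W is O(1/N): the window has width 2/N, f is Lipschitz in x, and a barrier
  argument for y(x + \<delta>) - y(x) gives |y(x + \<delta>) - y(x)| <= C (\<delta> + e^{-sqrt m x/\<epsilon>}
  + e^{-sqrt m (1 - x - \<delta>)/\<epsilon>}), where both exponentials are O(1/N) on the window, by the choice
  of the transition point and by \<epsilon> <= C0/N.
*)

lemma maximum_principle_nonpos:
  fixes \<psi> \<psi>' \<psi>'' :: "real \<Rightarrow> real"
  assumes ab: "a \<le> b" and cont: "continuous_on {a..b} \<psi>" and "\<psi> a \<le> 0" "\<psi> b \<le> 0"
    and d1: "\<And>x. a < x \<Longrightarrow> x < b \<Longrightarrow> (\<psi> has_real_derivative \<psi>' x) (at x)"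
    and d2: "\<And>x. a < x \<Longrightarrow> x < b \<Longrightarrow> (\<psi>' has_real_derivative \<psi>'' x) (at x)"
    and convex_where_pos: "\<And>x. a < x \<Longrightarrow> x < b \<Longrightarrow> \<psi> x > 0 \<Longrightarrow> \<psi>'' x > 0"
    and x: "x \<in> {a..b}"
  shows "\<psi> x \<le> 0"
proof (rule ccontr)
  assume "\<not> \<psi> x \<le> 0"
  obtain p where p: "p \<in> {a..b}" and pmax: "\<And>z. z \<in> {a..b} \<Longrightarrow> \<psi> z \<le> \<psi> p"
    using continuous_attains_sup[of "{a..b}" \<psi>] cont ab by auto
  have pos: "\<psi> p > 0" using pmax[OF x] \<open>\<not> \<psi> x \<le> 0\<close> by linarith
  with p assms(3,4) have ap: "a < p" and pb: "p < b" by (auto simp: order.order_iff_strict)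
  have "\<psi>' p = 0"
  proof (rule DERIV_local_max[OF d1[OF ap pb]])
    show "0 < min (p - a) (b - p)" using ap pb by simp
    show "\<forall>z. \<bar>p - z\<bar> < min (p - a) (b - p) \<longrightarrow> \<psi> z \<le> \<psi> p"
      using pmax by (auto simp: abs_if split: if_splits)
  qed
  obtain d where "d > 0" and slope_inc: "\<And>h. 0 < h \<Longrightarrow> h < d \<Longrightarrow> \<psi>' p < \<psi>' (p + h)"
    using DERIV_pos_inc_right[OF d2[OF ap pb] convex_where_pos[OF ap pb pos]] by blast
  define t where "t = min (d/2) ((b - p)/2)"
  have t: "0 < t" "t < d" "p + t < b" using \<open>d > 0\<close> pb by (auto simp: t_def min_def field_simps)
  have "\<psi> p < \<psi> (p + t)"
  proof (rule DERIV_pos_imp_increasing_open[of p "p + t" \<psi>])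
    show "\<exists>l. (\<psi> has_real_derivative l) (at z) \<and> 0 < l" if "p < z" "z < p + t" for z
    proof -
      have "\<psi>' z > 0" using slope_inc[of "z - p"] \<open>\<psi>' p = 0\<close> that t by simp
      with d1[of z] that ap t show ?thesis by auto
    qed
    show "continuous_on {p..p + t} \<psi>" using cont by (rule continuous_on_subset) (use ap t in auto)
  qed (use t in simp)
  moreover have "p + t \<in> {a..b}" using ap t by simp
  ultimately show False using pmax by force
qed

lemma derivative_nonneg_at_right_max:
  fixes \<psi> :: "real \<Rightarrow> real"
  assumes "(\<psi> has_real_derivative D) (at q)" "p < q" "\<And>x. x \<in> {p..q} \<Longrightarrow> \<psi> x \<le> \<psi> q"
  shows "D \<ge> 0"
proof (rule ccontr)
  assume "\<not> D \<ge> 0"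
  then obtain d where "d > 0" and dec: "\<And>h. 0 < h \<Longrightarrow> h < d \<Longrightarrow> \<psi> q < \<psi> (q - h)"
    using DERIV_neg_dec_left[OF assms(1)] by (metis not_le)
  define h where "h = min (d/2) (q - p)"
  have "0 < h" "h < d" "h \<le> q - p" using \<open>d > 0\<close> \<open>p < q\<close> by (auto simp: h_def min_def)
  with dec[of h] assms(3)[of "q - h"] show False by simp
qed

lemma derivative_nonpos_at_left_max:
  fixes \<psi> :: "real \<Rightarrow> real"
  assumes "(\<psi> has_real_derivative D) (at p)" "p < q" "\<And>x. x \<in> {p..q} \<Longrightarrow> \<psi> x \<le> \<psi> p"
  shows "D \<le> 0"
proof (rule ccontr)
  assume "\<not> D \<le> 0"
  then obtain d where "d > 0" and inc: "\<And>h. 0 < h \<Longrightarrow> h < d \<Longrightarrow> \<psi> p < \<psi> (p + h)"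
    using DERIV_pos_inc_right[OF assms(1)] by (metis not_le)
  define h where "h = min (d/2) (q - p)"
  have "0 < h" "h < d" "h \<le> q - p" using \<open>d > 0\<close> \<open>p < q\<close> by (auto simp: h_def min_def)
  with inc[of h] assms(3)[of "p + h"] show False by simp
qed

lemma endpoint_slopes_of_subsolution:
  fixes y y' y'' :: "real \<Rightarrow> real"
  assumes \<gamma>: "\<gamma> > 0" and \<beta>: "\<beta> > 0" "\<epsilon>\<^sup>2 * \<beta>\<^sup>2 = \<gamma>" and pq: "p < q"
    and cont: "continuous_on {p..q} y"
    and d1: "\<And>x. p < x \<Longrightarrow> x < q \<Longrightarrow> (y has_real_derivative y' x) (at x)"
    and d2: "\<And>x. p < x \<Longrightarrow> x < q \<Longrightarrow> (y' has_real_derivative y'' x) (at x)"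
    and sub: "\<And>x. p < x \<Longrightarrow> x < q \<Longrightarrow> \<epsilon>\<^sup>2 * y'' x - \<gamma> * y x \<le> c"
  shows "(y has_real_derivative Dq) (at q) \<Longrightarrow>
           Dq \<le> (y q + c/\<gamma>) * (\<beta> / tanh (\<beta> * (q - p))) - (y p + c/\<gamma>) * (\<beta> / sinh (\<beta> * (q - p)))"
    and "(y has_real_derivative Dp) (at p) \<Longrightarrow>
           Dp \<ge> (y q + c/\<gamma>) * (\<beta> / sinh (\<beta> * (q - p))) - (y p + c/\<gamma>) * (\<beta> / tanh (\<beta> * (q - p)))"
proof -
  define S where "S = sinh (\<beta> * (q - p))"
  have "S > 0" using \<beta> pq by (simp add: S_def)
  define A where "A = (y p + c/\<gamma>) / S"
  define B where "B = (y q + c/\<gamma>) / S"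
  \<comment> \<open>the solution of \<open>\<epsilon>\<^sup>2 u'' - \<gamma> u = c\<close> with the boundary values of \<open>y\<close>\<close>
  define u where "u = (\<lambda>x. - c/\<gamma> + A * sinh (\<beta> * (q - x)) + B * sinh (\<beta> * (x - p)))"
  define u' where "u' = (\<lambda>x. - A * \<beta> * cosh (\<beta> * (q - x)) + B * \<beta> * cosh (\<beta> * (x - p)))"
  define u'' where "u'' = (\<lambda>x. \<beta>\<^sup>2 * (u x + c/\<gamma>))"
  have du: "(u has_real_derivative u' x) (at x)" for x
    unfolding u_def u'_def by (auto intro!: derivative_eq_intros simp: algebra_simps)
  have du': "(u' has_real_derivative u'' x) (at x)" for x
    unfolding u_def u'_def u''_def
      by (auto intro!: derivative_eq_intros simp: algebra_simps power2_eq_square)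
  have "u p = y p" "u q = y q" using \<open>S > 0\<close> \<beta> pq by (simp_all add: u_def A_def B_def S_def)
  have y_above_u: "u x - y x \<le> 0" if "x \<in> {p..q}" for x
  proof (rule maximum_principle_nonpos[of p q "\<lambda>x. u x - y x" "\<lambda>x. u' x - y' x" "\<lambda>x. u'' x - y'' x"])
    show "continuous_on {p..q} (\<lambda>x. u x - y x)"
      using cont by (intro continuous_intros) (auto simp: u_def intro!: continuous_intros)
    show "u'' x - y'' x > 0" if "p < x" "x < q" "u x - y x > 0" for x
    proof -
      have "\<epsilon>\<^sup>2 * u'' x = \<gamma> * u x + c" using \<beta>(2) \<gamma> by (simp add: u''_def algebra_simps)
      then have "\<epsilon>\<^sup>2 * (u'' x - y'' x) \<ge> \<gamma> * (u x - y x)"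
        using sub[OF that(1,2)] by (simp add: algebra_simps)
      moreover have "\<gamma> * (u x - y x) > 0" using \<gamma> that(3) by simp
      ultimately have "\<epsilon>\<^sup>2 * (u'' x - y'' x) > 0" by linarith
      then show ?thesis by (simp add: zero_less_mult_iff)
    qed
    show "((\<lambda>x. u x - y x) has_real_derivative u' x - y' x) (at x)" if "p < x" "x < q" for x
      using du d1[OF that] by (rule DERIV_diff)
    show "((\<lambda>x. u' x - y' x) has_real_derivative u'' x - y'' x) (at x)" if "p < x" "x < q" for x
      using du' d2[OF that] by (rule DERIV_diff)
  qed (use pq that \<open>u p = y p\<close> \<open>u q = y q\<close> in auto)
  have "tanh (\<beta> * (q - p)) = S / cosh (\<beta> * (q - p))" by (simp add: S_def tanh_def)
  then have u'_ends: "u' q = (y q + c/\<gamma>) * (\<beta> / tanh (\<beta> * (q - p))) - (y p + c/\<gamma>) * (\<beta> / S)"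
    "u' p = (y q + c/\<gamma>) * (\<beta> / S) - (y p + c/\<gamma>) * (\<beta> / tanh (\<beta> * (q - p)))"
    by (simp_all add: u'_def A_def B_def)
  show "Dq \<le> (y q + c/\<gamma>) * (\<beta> / tanh (\<beta> * (q - p))) - (y p + c/\<gamma>) * (\<beta> / sinh (\<beta> * (q - p)))"
    if "(y has_real_derivative Dq) (at q)"
    using derivative_nonneg_at_right_max[OF DERIV_diff[OF du that] pq] y_above_u \<open>u q = y q\<close> u'_ends(1)
    by (simp add: S_def)
  show "Dp \<ge> (y q + c/\<gamma>) * (\<beta> / sinh (\<beta> * (q - p))) - (y p + c/\<gamma>) * (\<beta> / tanh (\<beta> * (q - p)))"
    if "(y has_real_derivative Dp) (at p)"
    using derivative_nonpos_at_left_max[OF DERIV_diff[OF du that] pq] y_above_u \<open>u p = y p\<close> u'_ends(2)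
    by (simp add: S_def)
qed

lemma endpoint_slopes_of_supersolution:
  fixes y y' y'' :: "real \<Rightarrow> real"
  assumes \<gamma>: "\<gamma> > 0" and \<beta>: "\<beta> > 0" "\<epsilon>\<^sup>2 * \<beta>\<^sup>2 = \<gamma>" and pq: "p < q"
    and cont: "continuous_on {p..q} y"
    and d1: "\<And>x. p < x \<Longrightarrow> x < q \<Longrightarrow> (y has_real_derivative y' x) (at x)"
    and d2: "\<And>x. p < x \<Longrightarrow> x < q \<Longrightarrow> (y' has_real_derivative y'' x) (at x)"
    and super: "\<And>x. p < x \<Longrightarrow> x < q \<Longrightarrow> c \<le> \<epsilon>\<^sup>2 * y'' x - \<gamma> * y x"
  shows "(y has_real_derivative Dq) (at q) \<Longrightarrow>
           Dq \<ge> (y q + c/\<gamma>) * (\<beta> / tanh (\<beta> * (q - p))) - (y p + c/\<gamma>) * (\<beta> / sinh (\<beta> * (q - p)))"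
    and "(y has_real_derivative Dp) (at p) \<Longrightarrow>
           Dp \<le> (y q + c/\<gamma>) * (\<beta> / sinh (\<beta> * (q - p))) - (y p + c/\<gamma>) * (\<beta> / tanh (\<beta> * (q - p)))"
proof -
  have hyps: "continuous_on {p..q} (\<lambda>x. - y x)"
    "\<And>x. p < x \<Longrightarrow> x < q \<Longrightarrow> ((\<lambda>x. - y x) has_real_derivative - y' x) (at x)"
    "\<And>x. p < x \<Longrightarrow> x < q \<Longrightarrow> ((\<lambda>x. - y' x) has_real_derivative - y'' x) (at x)"
    using cont d1 d2 by (auto intro!: continuous_intros derivative_intros)
  have neg_super: "\<epsilon>\<^sup>2 * - y'' x - \<gamma> * - y x \<le> - c" if "p < x" "x < q" for x
    using super[OF that] by simp
  note sub = endpoint_slopes_of_subsolution[OF \<gamma> \<beta> pq, where y = "\<lambda>x. - y x"]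
  have neg: "(- a + - c / \<gamma>) * t = - ((a + c / \<gamma>) * t)" for a t by (simp add: algebra_simps)
  show "Dq \<ge> (y q + c/\<gamma>) * (\<beta> / tanh (\<beta> * (q - p))) - (y p + c/\<gamma>) * (\<beta> / sinh (\<beta> * (q - p)))"
    if "(y has_real_derivative Dq) (at q)"
  proof -
    have "- Dq \<le> (- y q + - c/\<gamma>) * (\<beta> / tanh (\<beta> * (q - p)))
                   - (- y p + - c/\<gamma>) * (\<beta> / sinh (\<beta> * (q - p)))"
      by (rule sub(1)) (use hyps neg_super DERIV_minus[OF that] in auto)
    then show ?thesis unfolding neg by simp
  qed
  show "Dp \<le> (y q + c/\<gamma>) * (\<beta> / sinh (\<beta> * (q - p))) - (y p + c/\<gamma>) * (\<beta> / tanh (\<beta> * (q - p)))"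
    if "(y has_real_derivative Dp) (at p)"
  proof -
    have "- Dp \<ge> (- y q + - c/\<gamma>) * (\<beta> / sinh (\<beta> * (q - p)))
                   - (- y p + - c/\<gamma>) * (\<beta> / tanh (\<beta> * (q - p)))"
      by (rule sub(2)) (use hyps neg_super DERIV_minus[OF that] in auto)
    then show ?thesis unfolding neg by simp
  qed
qed

lemma scheme_residual_bound:
  fixes aL dL aR dR ym y0 yp fm f0 fp \<gamma> W D :: real
  assumes \<gamma>: "\<gamma> > 0" and "dL - aL > 0" "dR - aR > 0"
    and L_sub: "D \<le> (y0 + (f0 - \<gamma>*y0 + W)/\<gamma>)*dL - (ym + (f0 - \<gamma>*y0 + W)/\<gamma>)*aL"
    and R_sub: "D \<ge> (yp + (f0 - \<gamma>*y0 + W)/\<gamma>)*aR - (y0 + (f0 - \<gamma>*y0 + W)/\<gamma>)*dR"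
    and L_super: "D \<ge> (y0 + (f0 - \<gamma>*y0 - W)/\<gamma>)*dL - (ym + (f0 - \<gamma>*y0 - W)/\<gamma>)*aL"
    and R_super: "D \<le> (yp + (f0 - \<gamma>*y0 - W)/\<gamma>)*aR - (y0 + (f0 - \<gamma>*y0 - W)/\<gamma>)*dR"
    and "\<bar>(fm - \<gamma>*ym) - (f0 - \<gamma>*y0)\<bar> \<le> W" "\<bar>(fp - \<gamma>*yp) - (f0 - \<gamma>*y0)\<bar> \<le> W"
  shows "\<bar>\<gamma> / ((dL-aL)+(dR-aR)) * ((3*aL + dL + (dR-aR))*(ym-y0) - (3*aR+dR+(dL-aL))*(y0-yp)
           - (fm+2*f0+fp)/\<gamma>*((dL-aL)+(dR-aR)))\<bar> \<le> 6*W"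
proof -
  define S where "S = (dL-aL)+(dR-aR)"
  have "S > 0" using assms(2,3) by (simp add: S_def)
  define T where "T = aL*ym - (dL+dR)*y0 + aR*yp"
  define cp cm where "cp = (f0 - \<gamma>*y0 + W)/\<gamma>" and "cm = (f0 - \<gamma>*y0 - W)/\<gamma>"
  \<comment> \<open>eliminating the unknown slope \<open>D\<close> leaves \<open>T/S\<close> squeezed between \<open>cm\<close> and \<open>cp\<close>\<close>
  have "T \<le> cp * S"
    using L_sub R_sub unfolding T_def S_def cp_def[symmetric] by (simp add: algebra_simps)
  then have upper: "\<gamma> * (T / S) \<le> f0 - \<gamma>*y0 + W"
    using \<open>S > 0\<close> \<gamma> by (simp add: cp_def pos_divide_le_eq field_simps)
  have "T \<ge> cm * S"
    using L_super R_super unfolding T_def S_def cm_def[symmetric] by (simp add: algebra_simps)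
  then have lower: "\<gamma> * (T / S) \<ge> f0 - \<gamma>*y0 - W"
    using \<open>S > 0\<close> \<gamma> by (simp add: cm_def pos_le_divide_eq field_simps)
  have "(3*aL + dL + (dR-aR))*(ym-y0) - (3*aR+dR+(dL-aL))*(y0-yp) - (fm+2*f0+fp)/\<gamma>*S
      = 4*T + S * (ym + 2*y0 + yp - (fm+2*f0+fp)/\<gamma>)"
    unfolding T_def S_def by (simp add: algebra_simps)
  then have "\<gamma> / S * ((3*aL + dL + (dR-aR))*(ym-y0) - (3*aR+dR+(dL-aL))*(y0-yp) - (fm+2*f0+fp)/\<gamma>*S)
      = 4 * (\<gamma> * (T / S)) - ((fm - \<gamma>*ym) + 2*(f0 - \<gamma>*y0) + (fp - \<gamma>*yp))"
    using \<open>S > 0\<close> \<gamma> by (simp add: field_simps)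
  then show ?thesis unfolding S_def[symmetric]
    using upper lower assms(8,9) by (simp add: abs_le_iff)
qed

lemma coth_sub_csch_pos:
  fixes \<beta> l :: real
  assumes "\<beta> > 0" "l > 0"
  shows "\<beta> / tanh (\<beta> * l) - \<beta> / sinh (\<beta> * l) > 0"
proof -
  have "\<beta> * l > 0" using assms by simp
  then have "cosh (\<beta> * l) > 1" "sinh (\<beta> * l) > 0"
    using cosh_real_strict_mono[of 0 "\<beta> * l"] by simp_all
  moreover have "\<beta> / tanh (\<beta> * l) - \<beta> / sinh (\<beta> * l) = \<beta> * (cosh (\<beta> * l) - 1) / sinh (\<beta> * l)"
    by (simp add: tanh_def diff_divide_distrib right_diff_distrib)
  ultimately show ?thesis using assms by simp
qed

lemma is_solutionE:
  assumes "is_solution \<epsilon> f y"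
  obtains y' y'' where "continuous_on {0..1} y" "y 0 = 0" "y 1 = 0"
    "\<And>x. 0 < x \<Longrightarrow> x < 1 \<Longrightarrow> (y has_real_derivative y' x) (at x)"
    "\<And>x. 0 < x \<Longrightarrow> x < 1 \<Longrightarrow> (y' has_real_derivative y'' x) (at x)"
    "\<And>x. 0 < x \<Longrightarrow> x < 1 \<Longrightarrow> \<epsilon>\<^sup>2 * y'' x = f (x, y x)"
proof -
  obtain y' y'' where "continuous_on {0..1} y" "y 0 = 0" "y 1 = 0"
    "\<forall>x\<in>{0<..<1}. (y has_real_derivative y' x) (at x) \<and> (y' has_real_derivative y'' x) (at x)
       \<and> \<epsilon>\<^sup>2 * y'' x = f (x, y x)"
    using assms unfolding is_solution_def by blast
  then show thesis by (intro that[of y' y'']) auto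
qed

lemma solution_slope_pinched:
  assumes sol: "is_solution \<epsilon> f y" and \<epsilon>: "\<epsilon> > 0" and \<gamma>: "\<gamma> > 0"
    and pl: "0 \<le> p" "p < l" and lq: "l < q" "q \<le> 1"
    and osc: "\<And>x. x \<in> {p..q} \<Longrightarrow> \<bar>(f (x, y x) - \<gamma> * y x) - c\<bar> \<le> W"
  defines "\<beta> \<equiv> sqrt \<gamma> / \<epsilon>"
  defines "aL \<equiv> \<beta> / sinh (\<beta> * (l - p))" and "dL \<equiv> \<beta> / tanh (\<beta> * (l - p))"
    and "aR \<equiv> \<beta> / sinh (\<beta> * (q - l))" and "dR \<equiv> \<beta> / tanh (\<beta> * (q - l))"
  obtains D where "D \<le> (y l + (c + W)/\<gamma>) * dL - (y p + (c + W)/\<gamma>) * aL"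
    "D \<ge> (y q + (c + W)/\<gamma>) * aR - (y l + (c + W)/\<gamma>) * dR"
    "D \<ge> (y l + (c - W)/\<gamma>) * dL - (y p + (c - W)/\<gamma>) * aL"
    "D \<le> (y q + (c - W)/\<gamma>) * aR - (y l + (c - W)/\<gamma>) * dR"
proof -
  obtain y' y'' where cont: "continuous_on {0..1} y"
    and d1: "\<And>x. 0 < x \<Longrightarrow> x < 1 \<Longrightarrow> (y has_real_derivative y' x) (at x)"
    and d2: "\<And>x. 0 < x \<Longrightarrow> x < 1 \<Longrightarrow> (y' has_real_derivative y'' x) (at x)"
    and ode: "\<And>x. 0 < x \<Longrightarrow> x < 1 \<Longrightarrow> \<epsilon>\<^sup>2 * y'' x = f (x, y x)"
    using is_solutionE[OF sol] by metis
  have \<beta>: "\<beta> > 0" "\<epsilon>\<^sup>2 * \<beta>\<^sup>2 = \<gamma>" using \<epsilon> \<gamma> by (simp_all add: \<beta>_def power_divide)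
  have contL: "continuous_on {p..l} y" and contR: "continuous_on {l..q} y"
    using pl lq by (auto intro: continuous_on_subset[OF cont])
  have Dl: "(y has_real_derivative y' l) (at l)" using d1 pl lq by simp
  have sub: "\<epsilon>\<^sup>2 * y'' x - \<gamma> * y x \<le> c + W" and super: "c - W \<le> \<epsilon>\<^sup>2 * y'' x - \<gamma> * y x"
    if "p < x" "x < q" for x
    using osc[of x] ode[of x] that pl lq by (auto simp: abs_le_iff)
  show thesis
  proof (rule that[of "y' l"])
    show "y' l \<le> (y l + (c + W)/\<gamma>) * dL - (y p + (c + W)/\<gamma>) * aL"
      unfolding aL_def dL_def
      by (rule endpoint_slopes_of_subsolution(1)[where y' = y' and y'' = y'',
          OF \<gamma> \<beta> \<open>p < l\<close> contL _ _ _ Dl])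
        (use d1 d2 sub pl lq in auto)
    show "y' l \<ge> (y q + (c + W)/\<gamma>) * aR - (y l + (c + W)/\<gamma>) * dR"
      unfolding aR_def dR_def
      by (rule endpoint_slopes_of_subsolution(2)[where y' = y' and y'' = y'',
          OF \<gamma> \<beta> \<open>l < q\<close> contR _ _ _ Dl])
        (use d1 d2 sub pl lq in auto)
    show "y' l \<ge> (y l + (c - W)/\<gamma>) * dL - (y p + (c - W)/\<gamma>) * aL"
      unfolding aL_def dL_def
      by (rule endpoint_slopes_of_supersolution(1)[where y' = y' and y'' = y'',
          OF \<gamma> \<beta> \<open>p < l\<close> contL _ _ _ Dl])
        (use d1 d2 super pl lq in auto)
    show "y' l \<le> (y q + (c - W)/\<gamma>) * aR - (y l + (c - W)/\<gamma>) * dR"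
      unfolding aR_def dR_def
      by (rule endpoint_slopes_of_supersolution(2)[where y' = y' and y'' = y'',
          OF \<gamma> \<beta> \<open>l < q\<close> contR _ _ _ Dl])
        (use d1 d2 super pl lq in auto)
  qed
qed

lemma G_op_abs_le_residual_oscillation:
  fixes xs :: "nat \<Rightarrow> real" and y :: "real \<Rightarrow> real"
  assumes \<epsilon>: "\<epsilon> > 0" and \<gamma>: "\<gamma> > 0" and i: "0 < i" "i < N" and sol: "is_solution \<epsilon> f y"
    and mesh: "0 \<le> xs (i - 1)" "xs (i - 1) < xs i" "xs i < xs (i + 1)" "xs (i + 1) \<le> 1"
    and osc: "\<And>x. x \<in> {xs (i - 1)..xs (i + 1)} \<Longrightarrow>
                \<bar>(f (x, y x) - \<gamma> * y x) - (f (xs i, y (xs i)) - \<gamma> * y (xs i))\<bar> \<le> W"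
  shows "\<bar>G_op \<gamma> \<epsilon> f N xs (\<lambda>j. y (xs j)) i\<bar> \<le> 6 * W"
proof -
  define p l q where "p = xs (i - 1)" and "l = xs i" and "q = xs (i + 1)"
  define \<beta> where "\<beta> = sqrt \<gamma> / \<epsilon>"
  define aL dL aR dR where "aL = \<beta> / sinh (\<beta> * (l - p))" and "dL = \<beta> / tanh (\<beta> * (l - p))"
    and "aR = \<beta> / sinh (\<beta> * (q - l))" and "dR = \<beta> / tanh (\<beta> * (q - l))"
  obtain D where pinched:
    "D \<le> (y l + (f (l, y l) - \<gamma> * y l + W)/\<gamma>) * dL - (y p + (f (l, y l) - \<gamma> * y l + W)/\<gamma>) * aL"
    "D \<ge> (y q + (f (l, y l) - \<gamma> * y l + W)/\<gamma>) * aR - (y l + (f (l, y l) - \<gamma> * y l + W)/\<gamma>) * dR"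
    "D \<ge> (y l + (f (l, y l) - \<gamma> * y l - W)/\<gamma>) * dL - (y p + (f (l, y l) - \<gamma> * y l - W)/\<gamma>) * aL"
    "D \<le> (y q + (f (l, y l) - \<gamma> * y l - W)/\<gamma>) * aR - (y l + (f (l, y l) - \<gamma> * y l - W)/\<gamma>) * dR"
    using solution_slope_pinched[OF sol \<epsilon> \<gamma> mesh osc]
    unfolding p_def l_def q_def aL_def dL_def aR_def dR_def \<beta>_def by metis
  have G_eq: "G_op \<gamma> \<epsilon> f N xs (\<lambda>j. y (xs j)) i
      = \<gamma> / ((dL-aL)+(dR-aR)) * ((3*aL + dL + (dR-aR))*(y p - y l) - (3*aR + dR + (dL-aL))*(y l - y q)
          - (f (p, y p) + 2 * f (l, y l) + f (q, y q))/\<gamma> * ((dL-aL)+(dR-aR)))"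
    using i unfolding G_op_def Let_def \<beta>_def[symmetric]
    by (simp add: p_def l_def q_def aL_def dL_def aR_def dR_def)
  have "\<beta> > 0" "l - p > 0" "q - l > 0" using \<epsilon> \<gamma> mesh by (simp_all add: \<beta>_def p_def l_def q_def)
  show ?thesis
    unfolding G_eq
  proof (rule scheme_residual_bound[OF \<gamma> _ _ pinched])
    show "dL - aL > 0" "dR - aR > 0"
      unfolding aL_def dL_def aR_def dR_def
      using coth_sub_csch_pos \<open>\<beta> > 0\<close> \<open>l - p > 0\<close> \<open>q - l > 0\<close> by simp_all
    show "\<bar>(f (p, y p) - \<gamma> * y p) - (f (l, y l) - \<gamma> * y l)\<bar> \<le> W"
      "\<bar>(f (q, y q) - \<gamma> * y q) - (f (l, y l) - \<gamma> * y l)\<bar> \<le> W"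
      using osc mesh by (simp_all add: p_def l_def q_def)
  qed
qed

lemma Ck_on_imp_continuous_on: "Ck_on j S g \<Longrightarrow> continuous_on S g"
  by (cases j) (auto intro: has_derivative_continuous_on)

lemma Ck_on_Suc_partial_first:
  fixes f :: "real \<times> real \<Rightarrow> real"
  assumes "Ck_on (Suc j) ({0..1} \<times> UNIV) f"
  obtains g where "continuous_on ({0..1} \<times> UNIV) g"
    "\<And>x u. x \<in> {0..1} \<Longrightarrow> ((\<lambda>t. f (t, u)) has_real_derivative g (x, u)) (at x within {0..1})"
proof -
  obtain g1 g2 where
    d: "\<forall>p\<in>{0..1} \<times> UNIV. (f has_derivative (\<lambda>h. g1 p * fst h + g2 p * snd h)) (at p within {0..1} \<times> UNIV)"
    and "Ck_on j ({0..1} \<times> UNIV) g1" using assms by auto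
  have "((\<lambda>t. f (t, u)) has_real_derivative g1 (x, u)) (at x within {0..1})" if x: "x \<in> {0..1}" for x u
  proof -
    have "((\<lambda>t. f (t, u)) has_derivative (\<lambda>h. g1 (x, u) * fst (h, 0::real) + g2 (x, u) * snd (h, 0::real)))
        (at x within {0..1})"
      by (rule has_derivative_in_compose2[of "{0..1} \<times> UNIV" f "\<lambda>p h. g1 p * fst h + g2 p * snd h"])
         (use d x in \<open>auto intro!: derivative_eq_intros\<close>)
    then show ?thesis by (simp add: has_field_derivative_def mult_commute_abs)
  qed
  with Ck_on_imp_continuous_on[OF \<open>Ck_on j _ g1\<close>] show thesis by (rule that)
qed

lemma Ck_on_Suc_lipschitz_first:
  fixes f :: "real \<times> real \<Rightarrow> real"
  assumes "Ck_on (Suc j) ({0..1} \<times> UNIV) f"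
  obtains B where "\<And>x x' u. x \<in> {0..1} \<Longrightarrow> x' \<in> {0..1} \<Longrightarrow> \<bar>u\<bar> \<le> M \<Longrightarrow>
                    \<bar>f (x, u) - f (x', u)\<bar> \<le> B * \<bar>x - x'\<bar>"
proof -
  obtain g where cont: "continuous_on ({0..1} \<times> UNIV) g"
    and deriv: "\<And>x u. x \<in> {0..1} \<Longrightarrow> ((\<lambda>t. f (t, u)) has_real_derivative g (x, u)) (at x within {0..1})"
    using Ck_on_Suc_partial_first[OF assms] by blast
  have "compact (g ` ({0..1} \<times> {-M..M}))"
    by (intro compact_continuous_image continuous_on_subset[OF cont] compact_Times compact_Icc) auto
  then obtain B where B: "\<And>p. p \<in> {0..1} \<times> {-M..M} \<Longrightarrow> norm (g p) \<le> B"
    using compact_imp_bounded bounded_pos by (metis image_eqI)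
  have "\<bar>f (x, u) - f (x', u)\<bar> \<le> B * \<bar>x - x'\<bar>" if "x \<in> {0..1}" "x' \<in> {0..1}" "\<bar>u\<bar> \<le> M" for x x' u
    using field_differentiable_bound[where S = "{0..1}" and f = "\<lambda>t. f (t, u)" and f' = "\<lambda>z. g (z, u)"]
      deriv B that
    by (auto simp: abs_le_iff)
  then show thesis by (rule that)
qed

lemma difference_quotient_between:
  fixes g g' :: "real \<Rightarrow> real"
  assumes "\<And>w. (g has_real_derivative g' w) (at w)" "\<And>w. m \<le> g' w" "\<And>w. g' w \<le> \<gamma>"
  shows "\<exists>b. m \<le> b \<and> b \<le> \<gamma> \<and> g u - g v = b * (u - v)"
proof (cases u v rule: linorder_cases)
  case less
  then obtain z where "g v - g u = (v - u) * g' z" using MVT2[of u v g g'] assms(1) by blast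
  with assms(2,3) show ?thesis by (intro exI[of _ "g' z"]) (auto simp: algebra_simps)
next
  case equal
  with assms(2,3) show ?thesis by (intro exI[of _ "g' u"]) auto
next
  case greater
  then obtain z where "g u - g v = (u - v) * g' z" using MVT2[of v u g g'] assms(1) by blast
  with assms(2,3) show ?thesis by (intro exI[of _ "g' z"]) (auto simp: algebra_simps)
qed

lemma boundary_layer_barrier:
  fixes m \<epsilon> c M L :: real
  assumes "m > 0" "\<epsilon> > 0"
    and \<Phi>_def: "\<Phi> = (\<lambda>s. c + M * (exp (- (sqrt m * s / \<epsilon>)) + exp (- (sqrt m * (L - s) / \<epsilon>))))"
  obtains \<Phi>' \<Phi>'' where "\<And>s. (\<Phi> has_real_derivative \<Phi>' s) (at s)"
    "\<And>s. (\<Phi>' has_real_derivative \<Phi>'' s) (at s)" "\<And>s. \<epsilon>\<^sup>2 * \<Phi>'' s = m * (\<Phi> s - c)"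
proof
  define E1 E2 where "E1 = (\<lambda>s. exp (- (sqrt m * s / \<epsilon>)))" and "E2 = (\<lambda>s. exp (- (sqrt m * (L - s) / \<epsilon>)))"
  have sqrt_m_sq: "sqrt m * (sqrt m * z) = m * z" for z
    using assms(1) by (simp add: mult.assoc[symmetric])
  show "(\<Phi> has_real_derivative M * (sqrt m / \<epsilon>) * (E2 s - E1 s)) (at s)" for s
    unfolding \<Phi>_def E1_def E2_def
      using assms(2) by (auto intro!: derivative_eq_intros simp: algebra_simps)
  show "((\<lambda>s. M * (sqrt m / \<epsilon>) * (E2 s - E1 s)) has_real_derivative M * (m / \<epsilon>\<^sup>2) * (E1 s + E2 s)) (at s)"
    for s unfolding E1_def E2_def using assms(2)
    by (auto intro!: derivative_eq_intros simp: algebra_simps power2_eq_square sqrt_m_sq)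
  show "\<epsilon>\<^sup>2 * (M * (m / \<epsilon>\<^sup>2) * (E1 s + E2 s)) = m * (\<Phi> s - c)" for s
    unfolding \<Phi>_def E1_def E2_def using assms(2) by (simp add: field_simps)
qed

locale reaction_bounds =
  fixes m \<gamma> B0 B1 :: real and f :: "real \<times> real \<Rightarrow> real"
  assumes m_pos: "m > 0"
    and slope_between: "\<And>x u v. x \<in> {0..1} \<Longrightarrow> \<exists>b. m \<le> b \<and> b \<le> \<gamma> \<and> f (x, u) - f (x, v) = b * (u - v)"
    and f_zero_bound: "\<And>x. x \<in> {0..1} \<Longrightarrow> \<bar>f (x, 0)\<bar> \<le> B0"
    and lipschitz_first: "\<And>x x' u. x \<in> {0..1} \<Longrightarrow> x' \<in> {0..1} \<Longrightarrow> \<bar>u\<bar> \<le> B0 / m \<Longrightarrow>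
                            \<bar>f (x, u) - f (x', u)\<bar> \<le> B1 * \<bar>x - x'\<bar>"
begin

lemma m_le_gamma: "m \<le> \<gamma>"
  using slope_between[of 0 0 0] by force

lemma B0_nonneg: "B0 \<ge> 0"
  using f_zero_bound[of 0] by auto

lemma B1_nonneg: "B1 \<ge> 0"
  using lipschitz_first[of 0 1 0] B0_nonneg m_pos by simp

lemma signed_increment_lower_bound:
  assumes "x \<in> {0..1}" "x' \<in> {0..1}" "\<bar>u\<bar> \<le> B0 / m" "\<sigma> = 1 \<or> \<sigma> = -1" "\<sigma> * (u - v) \<ge> 0"
  shows "m * (\<sigma> * (u - v)) - B1 * \<bar>x' - x\<bar> \<le> \<sigma> * (f (x', u) - f (x, v))"
proof -
  obtain b where "m \<le> b" and b: "f (x, u) - f (x, v) = b * (u - v)"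
    using slope_between assms(1) by blast
  have "m * (\<sigma> * (u - v)) \<le> b * (\<sigma> * (u - v))" using \<open>m \<le> b\<close> assms(5) by (rule mult_right_mono)
  also have "\<dots> = \<sigma> * (f (x, u) - f (x, v))" by (simp add: b)
  finally have "m * (\<sigma> * (u - v)) \<le> \<sigma> * (f (x, u) - f (x, v))" .
  moreover have "\<sigma> * (f (x', u) - f (x, u)) \<ge> - (B1 * \<bar>x' - x\<bar>)"
    using lipschitz_first[OF assms(2,1,3)] assms(4) by (auto simp: abs_le_iff)
  ultimately show ?thesis by (simp add: algebra_simps)
qed

lemma solution_abs_bound:
  assumes sol: "is_solution \<epsilon> f y" and x: "x \<in> {0..1}"
  shows "\<bar>y x\<bar> \<le> B0 / m"
proof -
  obtain y' y'' where cont: "continuous_on {0..1} y" and "y 0 = 0" "y 1 = 0"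
    and d1: "\<And>x. 0 < x \<Longrightarrow> x < 1 \<Longrightarrow> (y has_real_derivative y' x) (at x)"
    and d2: "\<And>x. 0 < x \<Longrightarrow> x < 1 \<Longrightarrow> (y' has_real_derivative y'' x) (at x)"
    and ode: "\<And>x. 0 < x \<Longrightarrow> x < 1 \<Longrightarrow> \<epsilon>\<^sup>2 * y'' x = f (x, y x)"
    using is_solutionE[OF sol] by metis
  have "\<sigma> * y x - B0 / m \<le> 0" if \<sigma>: "\<sigma> = 1 \<or> \<sigma> = -1" for \<sigma>
  proof (rule maximum_principle_nonpos[of 0 1 "\<lambda>s. \<sigma> * y s - B0 / m" "\<lambda>s. \<sigma> * y' s" "\<lambda>s. \<sigma> * y'' s"])
    show "continuous_on {0..1} (\<lambda>s. \<sigma> * y s - B0 / m)" using cont by (intro continuous_intros)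
    show "\<sigma> * y 0 - B0 / m \<le> 0" "\<sigma> * y 1 - B0 / m \<le> 0"
      using \<open>y 0 = 0\<close> \<open>y 1 = 0\<close> B0_nonneg m_pos by simp_all
    show "((\<lambda>s. \<sigma> * y s - B0 / m) has_real_derivative \<sigma> * y' s) (at s)"
      "((\<lambda>s. \<sigma> * y' s) has_real_derivative \<sigma> * y'' s) (at s)" if "0 < s" "s < 1" for s
      using d1[OF that] d2[OF that] by (auto intro!: derivative_eq_intros)
    show "\<sigma> * y'' s > 0" if s: "0 < s" "s < 1" and pos: "\<sigma> * y s - B0 / m > 0" for s
    proof -
      obtain b where "m \<le> b" and b: "f (s, y s) - f (s, 0) = b * y s"
        using slope_between[of s "y s" 0] s by auto
      have "0 \<le> B0 / m" using B0_nonneg m_pos by simp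
      have "0 < m * (\<sigma> * y s) - B0" using pos m_pos by (simp add: field_simps)
      also have "\<dots> \<le> b * (\<sigma> * y s) - B0"
        using \<open>m \<le> b\<close> pos \<open>0 \<le> B0 / m\<close> by (simp add: mult_right_mono)
      also have "\<dots> \<le> \<sigma> * f (s, y s)"
        using b f_zero_bound[of s] s \<sigma> by (auto simp: abs_le_iff algebra_simps)
      also have "\<dots> = \<epsilon>\<^sup>2 * (\<sigma> * y'' s)" using ode[OF s] by simp
      finally show ?thesis by (simp add: zero_less_mult_iff)
    qed
  qed (use x in auto)
  from this[of 1] this[of "-1"] show ?thesis by (simp add: abs_le_iff)
qed

lemma solution_increment_bound:
  assumes sol: "is_solution \<epsilon> f y" and \<epsilon>: "\<epsilon> > 0" and \<delta>: "0 < \<delta>" and x: "0 \<le> x" "x + \<delta> \<le> 1"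
  shows "\<bar>y (x + \<delta>) - y x\<bar> \<le> B1 * \<delta> / m
           + 2 * (B0 / m) * (exp (- (sqrt m * x / \<epsilon>)) + exp (- (sqrt m * (1 - \<delta> - x) / \<epsilon>)))"
proof -
  obtain y' y'' where cont: "continuous_on {0..1} y" and "y 0 = 0" "y 1 = 0"
    and d1: "\<And>x. 0 < x \<Longrightarrow> x < 1 \<Longrightarrow> (y has_real_derivative y' x) (at x)"
    and d2: "\<And>x. 0 < x \<Longrightarrow> x < 1 \<Longrightarrow> (y' has_real_derivative y'' x) (at x)"
    and ode: "\<And>x. 0 < x \<Longrightarrow> x < 1 \<Longrightarrow> \<epsilon>\<^sup>2 * y'' x = f (x, y x)"
    using is_solutionE[OF sol] by metis
  define M where "M = B0 / m"
  have "M \<ge> 0" using B0_nonneg m_pos by (simp add: M_def)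
  have y_bound: "\<bar>y s\<bar> \<le> M" if "s \<in> {0..1}" for s
    using solution_abs_bound[OF sol that] by (simp add: M_def)
  define \<Phi> where "\<Phi> = (\<lambda>s. B1 * \<delta> / m
                          + 2 * M * (exp (- (sqrt m * s / \<epsilon>)) + exp (- (sqrt m * (1 - \<delta> - s) / \<epsilon>))))"
  obtain \<Phi>' \<Phi>'' where d\<Phi>: "\<And>s. (\<Phi> has_real_derivative \<Phi>' s) (at s)"
    and d\<Phi>': "\<And>s. (\<Phi>' has_real_derivative \<Phi>'' s) (at s)"
    and "\<And>s. \<epsilon>\<^sup>2 * \<Phi>'' s = m * (\<Phi> s - B1 * \<delta> / m)"
    using boundary_layer_barrier[OF m_pos \<epsilon> \<Phi>_def] by metis
  then have \<Phi>_ode: "\<epsilon>\<^sup>2 * \<Phi>'' s = m * \<Phi> s - B1 * \<delta>" for s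
    using m_pos by (simp add: right_diff_distrib)
  have "0 \<le> B1 * \<delta> / m" "\<And>z. 0 \<le> 2 * M * exp z" using B1_nonneg m_pos \<delta> \<open>M \<ge> 0\<close> by simp_all
  then have \<Phi>_ge: "\<Phi> 0 \<ge> 2 * M" "\<Phi> (1 - \<delta>) \<ge> 2 * M" "\<Phi> s \<ge> 0" for s
    unfolding \<Phi>_def distrib_left by (simp_all add: add_nonneg_nonneg add_increasing2)
  \<comment> \<open>\<open>\<Phi>\<close> is a supersolution for the shifted difference \<open>w = \<sigma> (y (s + \<delta>) - y s)\<close>,
      which satisfies \<open>\<epsilon>\<^sup>2 w'' \<ge> m w - B1 \<delta>\<close> wherever \<open>w \<ge> 0\<close>\<close>
  have "\<sigma> * (y (x + \<delta>) - y x) - \<Phi> x \<le> 0" if \<sigma>: "\<sigma> = 1 \<or> \<sigma> = -1" for \<sigma>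
  proof (rule maximum_principle_nonpos[of 0 "1 - \<delta>" "\<lambda>s. \<sigma> * (y (s + \<delta>) - y s) - \<Phi> s"
        "\<lambda>s. \<sigma> * (y' (s + \<delta>) - y' s) - \<Phi>' s" "\<lambda>s. \<sigma> * (y'' (s + \<delta>) - y'' s) - \<Phi>'' s"])
    have "continuous_on {0..1 - \<delta>} (\<lambda>s. y (s + \<delta>))" "continuous_on {0..1 - \<delta>} y"
      using \<delta>
      by (auto intro!: continuous_on_compose2[OF cont] continuous_intros continuous_on_subset[OF cont])
    moreover have "continuous_on {0..1 - \<delta>} \<Phi>"
      using d\<Phi>
      by (intro DERIV_continuous_on[where D = \<Phi>']) (blast intro: has_field_derivative_at_within)
    ultimately show "continuous_on {0..1 - \<delta>} (\<lambda>s. \<sigma> * (y (s + \<delta>) - y s) - \<Phi> s)"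
      by (intro continuous_intros)
    show "\<sigma> * (y (0 + \<delta>) - y 0) - \<Phi> 0 \<le> 0" "\<sigma> * (y (1 - \<delta> + \<delta>) - y (1 - \<delta>)) - \<Phi> (1 - \<delta>) \<le> 0"
      using y_bound[of \<delta>] y_bound[of "1 - \<delta>"] \<Phi>_ge \<delta> x \<sigma> \<open>y 0 = 0\<close> \<open>y 1 = 0\<close>
      by (auto simp: abs_le_iff)
    fix s assume s: "0 < s" "s < 1 - \<delta>"
    have "((\<lambda>s. y (s + \<delta>)) has_real_derivative y' (s + \<delta>)) (at s)"
      "((\<lambda>s. y' (s + \<delta>)) has_real_derivative y'' (s + \<delta>)) (at s)"
      using d1[of "s + \<delta>"] d2[of "s + \<delta>"] s \<delta> DERIV_shift by auto
    then show "((\<lambda>s. \<sigma> * (y (s + \<delta>) - y s) - \<Phi> s)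
                  has_real_derivative \<sigma> * (y' (s + \<delta>) - y' s) - \<Phi>' s) (at s)"
      "((\<lambda>s. \<sigma> * (y' (s + \<delta>) - y' s) - \<Phi>' s)
                  has_real_derivative \<sigma> * (y'' (s + \<delta>) - y'' s) - \<Phi>'' s) (at s)"
      using d1[of s] d2[of s] d\<Phi>[of s] d\<Phi>'[of s] s \<delta> by (auto intro!: derivative_eq_intros)
    assume pos: "\<sigma> * (y (s + \<delta>) - y s) - \<Phi> s > 0"
    have "0 < m * (\<sigma> * (y (s + \<delta>) - y s) - \<Phi> s)" using m_pos pos by simp
    also have "\<dots> = m * (\<sigma> * (y (s + \<delta>) - y s)) - B1 * \<bar>s + \<delta> - s\<bar> - \<epsilon>\<^sup>2 * \<Phi>'' s"
      using \<Phi>_ode[of s] \<delta> by (simp add: algebra_simps)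
    also have "\<dots> \<le> \<sigma> * (f (s + \<delta>, y (s + \<delta>)) - f (s, y s)) - \<epsilon>\<^sup>2 * \<Phi>'' s"
      using signed_increment_lower_bound[of s "s + \<delta>" "y (s + \<delta>)" \<sigma> "y s"] y_bound[of "s + \<delta>"]
        s \<delta> \<sigma> pos \<Phi>_ge(3)[of s] by (simp add: M_def)
    also have "\<dots> = \<epsilon>\<^sup>2 * (\<sigma> * (y'' (s + \<delta>) - y'' s) - \<Phi>'' s)"
      using ode[of s] ode[of "s + \<delta>"] s \<delta> by (simp add: algebra_simps)
    finally show "\<sigma> * (y'' (s + \<delta>) - y'' s) - \<Phi>'' s > 0" by (simp add: zero_less_mult_iff)
  qed (use x in auto)
  from this[of 1] this[of "-1"] show ?thesis by (simp add: \<Phi>_def M_def abs_le_iff)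
qed

end

lemma shishkin_mesh_near_transition:
  fixes \<epsilon> m :: real
  assumes "N = 4 * i" "i \<ge> 1"
  defines "\<tau> \<equiv> shishkin_lambda \<epsilon> m N"
  shows "shishkin_mesh \<epsilon> m N (i - 1) = \<tau> - 4 * \<tau> / N"
    and "shishkin_mesh \<epsilon> m N i = \<tau>"
    and "shishkin_mesh \<epsilon> m N (i + 1) = \<tau> + 2 * (1 - 2 * \<tau>) / N"
proof -
  have N_div: "N div 4 = i" "3 * N div 4 = 3 * i" using assms(1) by auto
  have "real N = 4 * real i" "real i > 0" using assms(1,2) by simp_all
  then show "shishkin_mesh \<epsilon> m N (i - 1) = \<tau> - 4 * \<tau> / N" "shishkin_mesh \<epsilon> m N i = \<tau>"
    "shishkin_mesh \<epsilon> m N (i + 1) = \<tau> + 2 * (1 - 2 * \<tau>) / N"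
    unfolding shishkin_mesh_def Let_def \<tau>_def[symmetric] N_div using assms(2)
    by (simp_all add: of_nat_diff field_simps)
qed

lemma shishkin_transition_window:
  fixes \<epsilon> m :: real
  assumes "N = 4 * i" "i \<ge> 1" "\<epsilon> > 0" "m > 0" "shishkin_lambda \<epsilon> m N \<le> 1/4"
  defines "xs \<equiv> shishkin_mesh \<epsilon> m N"
  shows "0 \<le> xs (i - 1)" "xs (i - 1) < xs i" "xs i < xs (i + 1)" "xs (i + 1) \<le> 1/2"
    and "xs (i + 1) - xs (i - 1) = 2 / N"
proof -
  define \<tau> where "\<tau> = shishkin_lambda \<epsilon> m N"
  have N: "real N \<ge> 4" using assms(1,2) by simp
  then have "\<tau> > 0" using assms(3,4) by (simp add: \<tau>_def shishkin_lambda_def)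
  have "\<tau> \<le> 1/4" using assms(5) by (simp add: \<tau>_def)
  note xs = shishkin_mesh_near_transition[OF assms(1,2), of \<epsilon> m, folded \<tau>_def xs_def]
  show "0 \<le> xs (i - 1)" "xs (i - 1) < xs i" "xs i < xs (i + 1)" "xs (i + 1) - xs (i - 1) = 2 / N"
    unfolding xs using N \<open>\<tau> > 0\<close> \<open>\<tau> \<le> 1/4\<close> by (simp_all add: field_simps)
  have "2 * (1 - 2 * \<tau>) / N \<le> 2 * (1 - 2 * \<tau>) / 4"
    using N \<open>\<tau> \<le> 1/4\<close> by (intro divide_left_mono) auto
  also have "\<dots> = 1/2 - \<tau>" by simp
  finally show "xs (i + 1) \<le> 1/2" unfolding xs by linarith
qed

lemma exp_neg_le_inverse:
  fixes z :: real
  assumes "z > 0"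
  shows "exp (- z) \<le> 1 / z"
proof -
  have "z \<le> exp z" using exp_ge_add_one_self[of z] by linarith
  with assms show ?thesis by (simp add: exp_minus field_simps)
qed

lemma exp_decay_past_transition:
  fixes \<epsilon> m x :: real
  assumes "N = 4 * i" "i \<ge> 1" "\<epsilon> > 0" "m > 0"
    and x: "shishkin_lambda \<epsilon> m N - 4 * shishkin_lambda \<epsilon> m N / N \<le> x"
  shows "exp (- (sqrt m * x / \<epsilon>)) \<le> 4 / N"
proof -
  have N: "real N \<ge> 4" using assms(1,2) by simp
  then have "ln (real N) > 0" by simp
  have "ln (real N) - ln 4 \<le> 2 * ln (real N) * (1 - 4 / N)"
  proof (cases "i = 1")
    case True
    then show ?thesis using assms(1) by simp
  next
    case False
    then have "real i \<ge> 2" using assms(2) by simp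
    then have "1/2 \<le> 1 - 4 / real N" using assms(1) by (simp add: field_simps)
    then have "2 * ln (real N) * (1/2) \<le> 2 * ln (real N) * (1 - 4 / real N)"
      using \<open>ln (real N) > 0\<close> by (intro mult_left_mono) auto
    moreover have "ln (4::real) \<ge> 0" by simp
    ultimately show ?thesis by linarith
  qed
  also have "\<dots> = sqrt m * (shishkin_lambda \<epsilon> m N - 4 * shishkin_lambda \<epsilon> m N / N) / \<epsilon>"
    using assms(3,4) by (simp add: shishkin_lambda_def field_simps)
  also have "\<dots> \<le> sqrt m * x / \<epsilon>" using x assms(3,4) by (simp add: divide_right_mono)
  finally have "exp (- (sqrt m * x / \<epsilon>)) \<le> exp (ln 4 - ln (real N))" by simp
  also have "\<dots> = 4 / N" using N by (simp add: exp_diff)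
  finally show ?thesis .
qed

lemma exp_decay_away_from_boundary:
  fixes \<epsilon> m t :: real
  assumes "\<epsilon> > 0" "m > 0" "\<epsilon> \<le> C0 / N" "1/4 \<le> t"
  shows "exp (- (sqrt m * t / \<epsilon>)) \<le> 4 * C0 / (sqrt m * N)"
proof -
  have "exp (- (sqrt m * t / \<epsilon>)) \<le> exp (- (sqrt m / (4 * \<epsilon>)))"
    using assms by (simp add: field_simps)
  also have "\<dots> \<le> 4 * \<epsilon> / sqrt m" using exp_neg_le_inverse[of "sqrt m / (4 * \<epsilon>)"] assms by simp
  also have "\<dots> \<le> 4 * C0 / (sqrt m * N)"
    using divide_right_mono[OF assms(3), of "sqrt m / 4"] assms(2) by (simp add: field_simps)
  finally show ?thesis .
qed

context reaction_bounds
begin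

lemma solution_increment_near_transition:
  assumes sol: "is_solution \<epsilon> f y" and \<epsilon>: "\<epsilon> > 0" and N: "N = 4 * i" "i \<ge> 1"
    and \<tau>: "shishkin_lambda \<epsilon> m N \<le> 1/4" and \<epsilon>N: "\<epsilon> \<le> C0 / N"
    and pq: "shishkin_mesh \<epsilon> m N (i - 1) \<le> p" "p \<le> q" "q \<le> shishkin_mesh \<epsilon> m N (i + 1)"
  shows "\<bar>y q - y p\<bar> \<le> (2 * B1 / m + 8 * (B0 / m) * (1 + C0 / sqrt m)) / N"
proof (cases "p = q")
  case True
  have "real N > 0" using N by simp
  with \<epsilon>N have "\<epsilon> * N \<le> C0" by (simp add: field_simps)
  with \<epsilon> \<open>real N > 0\<close> have "C0 > 0" by (smt (verit) mult_pos_pos)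
  then show ?thesis using True B0_nonneg B1_nonneg m_pos by simp
next
  case False
  note window = shishkin_transition_window[OF N \<epsilon> m_pos \<tau>]
  define \<delta> where "\<delta> = q - p"
  have \<delta>: "0 < \<delta>" "\<delta> \<le> 2 / N" using pq False window(5) by (auto simp: \<delta>_def)
  have "0 \<le> p" "p + \<delta> \<le> 1" using window(1,4) pq by (auto simp: \<delta>_def)
  then have "\<bar>y (p + \<delta>) - y p\<bar>
      \<le> B1 * \<delta> / m + 2 * (B0 / m) * (exp (- (sqrt m * p / \<epsilon>)) + exp (- (sqrt m * (1 - \<delta> - p) / \<epsilon>)))"
    by (rule solution_increment_bound[OF sol \<epsilon> \<delta>(1)])
  also have "\<dots> \<le> B1 * (2 / N) / m + 2 * (B0 / m) * (4 / N + 4 * C0 / (sqrt m * N))"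
  proof -
    have "exp (- (sqrt m * p / \<epsilon>)) \<le> 4 / N"
      using exp_decay_past_transition[OF N \<epsilon> m_pos] pq(1)
      unfolding shishkin_mesh_near_transition[OF N] by blast
    moreover have "exp (- (sqrt m * (1 - \<delta> - p) / \<epsilon>)) \<le> 4 * C0 / (sqrt m * N)"
      using exp_decay_away_from_boundary[OF \<epsilon> m_pos \<epsilon>N] window(4) pq by (simp add: \<delta>_def)
    moreover have "B1 * \<delta> / m \<le> B1 * (2 / N) / m"
      using \<delta>(2) B1_nonneg m_pos by (intro divide_right_mono mult_left_mono) auto
    ultimately show ?thesis using B0_nonneg m_pos by (smt (verit) mult_left_mono divide_nonneg_pos)
  qed
  also have "\<dots> = (2 * B1 / m + 8 * (B0 / m) * (1 + C0 / sqrt m)) / N"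
    using m_pos N by (simp add: field_simps)
  finally show ?thesis by (simp add: \<delta>_def)
qed

lemma residual_oscillation_near_transition:
  assumes sol: "is_solution \<epsilon> f y" and \<epsilon>: "\<epsilon> > 0" and N: "N = 4 * i" "i \<ge> 1"
    and \<tau>: "shishkin_lambda \<epsilon> m N \<le> 1/4" and \<epsilon>N: "\<epsilon> \<le> C0 / N"
    and x: "shishkin_mesh \<epsilon> m N (i - 1) \<le> x" "x \<le> shishkin_mesh \<epsilon> m N (i + 1)"
  defines "l \<equiv> shishkin_mesh \<epsilon> m N i" and "K \<equiv> 2 * B1 / m + 8 * (B0 / m) * (1 + C0 / sqrt m)"
  shows "\<bar>(f (x, y x) - \<gamma> * y x) - (f (l, y l) - \<gamma> * y l)\<bar> \<le> (2 * B1 + 2 * \<gamma> * K) / N"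
proof -
  note window = shishkin_transition_window[OF N \<epsilon> m_pos \<tau>, folded l_def]
  have x01: "x \<in> {0..1}" "l \<in> {0..1}" using window x by auto
  have y_osc: "\<bar>y x - y l\<bar> \<le> K / N"
  proof (cases "x \<le> l")
    case True
    then show ?thesis using solution_increment_near_transition[OF sol \<epsilon> N \<tau> \<epsilon>N x(1), of l] window
      by (simp add: l_def K_def abs_minus_commute)
  next
    case False
    then show ?thesis
      using solution_increment_near_transition[OF sol \<epsilon> N \<tau> \<epsilon>N _ _ x(2), of l] window
      by (simp add: l_def K_def)
  qed
  have "0 \<le> \<gamma>" using m_pos m_le_gamma by simp
  have "\<bar>\<gamma> * y x - \<gamma> * y l\<bar> = \<gamma> * \<bar>y x - y l\<bar>"
    using \<open>0 \<le> \<gamma>\<close> by (simp add: abs_mult right_diff_distrib[symmetric])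
  also have "\<dots> \<le> \<gamma> * (K / N)" using y_osc \<open>0 \<le> \<gamma>\<close> by (rule mult_left_mono)
  finally have \<gamma>_osc: "\<bar>\<gamma> * y x - \<gamma> * y l\<bar> \<le> \<gamma> * (K / N)" .
  have "\<bar>x - l\<bar> \<le> 2 / N" using window x by (simp add: abs_le_iff)
  then have x_osc: "\<bar>f (x, y x) - f (l, y x)\<bar> \<le> B1 * (2 / N)"
    using lipschitz_first[OF x01 solution_abs_bound[OF sol x01(1)]] B1_nonneg
    by (meson mult_left_mono order.trans)
  obtain b where "m \<le> b" "b \<le> \<gamma>" and b: "f (l, y x) - f (l, y l) = b * (y x - y l)"
    using slope_between x01(2) by blast
  have "\<bar>f (l, y x) - f (l, y l)\<bar> = b * \<bar>y x - y l\<bar>" using b \<open>m \<le> b\<close> m_pos by (simp add: abs_mult)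
  also have "\<dots> \<le> \<gamma> * (K / N)"
    using \<open>m \<le> b\<close> \<open>b \<le> \<gamma>\<close> m_pos y_osc by (intro mult_mono) auto
  finally have u_osc: "\<bar>f (l, y x) - f (l, y l)\<bar> \<le> \<gamma> * (K / N)" .
  have "(2 * B1 + 2 * \<gamma> * K) / N = B1 * (2 / N) + \<gamma> * (K / N) + \<gamma> * (K / N)"
    by (simp add: add_divide_distrib algebra_simps)
  then show ?thesis using x_osc u_osc \<gamma>_osc unfolding abs_le_iff by linarith
qed

lemma G_op_at_transition_le:
  assumes sol: "is_solution \<epsilon> f y" and \<epsilon>: "\<epsilon> > 0" and "N > 0" "4 dvd N"
    and \<tau>: "shishkin_lambda \<epsilon> m N \<le> 1/4" and \<epsilon>N: "\<epsilon> \<le> C0 / N"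
  defines "W \<equiv> 2 * B1 + 2 * \<gamma> * (2 * B1 / m + 8 * (B0 / m) * (1 + C0 / sqrt m))"
  shows "\<bar>G_op \<gamma> \<epsilon> f N (shishkin_mesh \<epsilon> m N) (\<lambda>j. y (shishkin_mesh \<epsilon> m N j)) (N div 4)\<bar> \<le> 6 * (W / N)"
proof -
  define i xs where "i = N div 4" and "xs = shishkin_mesh \<epsilon> m N"
  have N: "N = 4 * i" "i \<ge> 1" using \<open>N > 0\<close> \<open>4 dvd N\<close> by (auto simp: i_def)
  note window = shishkin_transition_window[OF N \<epsilon> m_pos \<tau>, folded xs_def]
  have osc: "\<bar>(f (x, y x) - \<gamma> * y x) - (f (xs i, y (xs i)) - \<gamma> * y (xs i))\<bar> \<le> W / N"
    if "x \<in> {xs (i - 1)..xs (i + 1)}" for x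
    using residual_oscillation_near_transition[OF sol \<epsilon> N \<tau> \<epsilon>N] that by (simp add: W_def xs_def)
  have "\<bar>G_op \<gamma> \<epsilon> f N xs (\<lambda>j. y (xs j)) i\<bar> \<le> 6 * (W / N)"
    by (rule G_op_abs_le_residual_oscillation[OF \<epsilon> _ _ _ sol window(1-3) _ osc])
      (use window(4) N m_pos m_le_gamma in auto)
  then show ?thesis by (simp add: i_def xs_def)
qed

end

lemma reaction_bounds_of_Ck:
  fixes f :: "real \<times> real \<Rightarrow> real"
  assumes "k \<ge> 2" and hf: "Ck_on k ({0..1} \<times> UNIV) f"
    and "\<forall>x\<in>{0..1}. \<forall>u. ((\<lambda>w. f (x, w)) has_real_derivative fy x u) (at u)"
    and "m > 0" "\<forall>x\<in>{0..1}. \<forall>u. fy x u \<ge> m" "\<forall>x\<in>{0..1}. \<forall>u. \<gamma> \<ge> fy x u"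
  obtains B0 B1 where "reaction_bounds m \<gamma> B0 B1 f"
proof -
  obtain j where "k = Suc j" using assms(1) by (cases k) auto
  note Ck = hf[unfolded this]
  have "continuous_on {0..1} (\<lambda>x. f (x, 0))"
    by (rule continuous_on_compose2[OF Ck_on_imp_continuous_on[OF hf]]) (auto intro!: continuous_intros)
  then have "compact ((\<lambda>x. f (x, 0)) ` {0..1})" by (rule compact_continuous_image) simp
  then obtain B0 where B0: "\<And>x. x \<in> {0..1} \<Longrightarrow> \<bar>f (x, 0)\<bar> \<le> B0"
    using compact_imp_bounded bounded_pos by (metis image_eqI real_norm_def)
  obtain B1 where B1: "\<And>x x' u. x \<in> {0..1} \<Longrightarrow> x' \<in> {0..1} \<Longrightarrow> \<bar>u\<bar> \<le> B0 / m \<Longrightarrow>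
                         \<bar>f (x, u) - f (x', u)\<bar> \<le> B1 * \<bar>x - x'\<bar>"
    using Ck_on_Suc_lipschitz_first[OF Ck, where M = "B0 / m"] by metis
  have slope: "\<exists>b. m \<le> b \<and> b \<le> \<gamma> \<and> f (x, u) - f (x, v) = b * (u - v)" if "x \<in> {0..1}" for x u v
    by (rule difference_quotient_between) (use assms(3-6) that in auto)
  have "reaction_bounds m \<gamma> B0 B1 f" using \<open>m > 0\<close> slope B0 B1 by unfold_locales
  then show thesis by (rule that)
qed

theorem lemma4:
  fixes f :: "real \<times> real \<Rightarrow> real" and fy :: "real \<Rightarrow> real \<Rightarrow> real"
    and k :: nat and m \<gamma> C0 :: real
  assumes hk: "k \<ge> 2"
    and hf: "Ck_on k ({0..1} \<times> UNIV) f"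
    and hfy: "\<forall>x\<in>{0..1}. \<forall>u. ((\<lambda>w. f (x, w)) has_real_derivative fy x u) (at u)"
    and hm: "m > 0"
    and hfym: "\<forall>x\<in>{0..1}. \<forall>u. fy x u \<ge> m"
    and hgamma: "\<forall>x\<in>{0..1}. \<forall>u. \<gamma> \<ge> fy x u"
    and hC0: "C0 > 0"
  shows "\<exists>C>0. \<forall>\<epsilon> (N::nat) y.
           \<epsilon> > 0 \<and> N > 0 \<and> 4 dvd N
           \<and> 2 * \<epsilon> * ln (real N) / sqrt m \<le> 1 / 4
           \<and> \<epsilon> \<le> C0 / real N
           \<and> is_solution \<epsilon> f y
           \<longrightarrow> \<bar>G_op \<gamma> \<epsilon> f N (shishkin_mesh \<epsilon> m N)
                    (\<lambda>i. y (shishkin_mesh \<epsilon> m N i)) (N div 4)\<bar> \<le> C / real N"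
proof -
  obtain B0 B1 where "reaction_bounds m \<gamma> B0 B1 f"
    using reaction_bounds_of_Ck[OF hk hf hfy hm hfym hgamma] by blast
  then interpret reaction_bounds m \<gamma> B0 B1 f .
  define W where "W = 2 * B1 + 2 * \<gamma> * (2 * B1 / m + 8 * (B0 / m) * (1 + C0 / sqrt m))"
  have "W \<ge> 0" using B0_nonneg B1_nonneg m_le_gamma hm hC0 by (simp add: W_def)
  show ?thesis
  proof (intro exI[of _ "6 * W + 1"] conjI allI impI)
    fix \<epsilon> :: real and N :: nat and y :: "real \<Rightarrow> real"
    assume "\<epsilon> > 0 \<and> N > 0 \<and> 4 dvd N \<and> 2 * \<epsilon> * ln (real N) / sqrt m \<le> 1 / 4
            \<and> \<epsilon> \<le> C0 / real N \<and> is_solution \<epsilon> f y"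
    then have "\<bar>G_op \<gamma> \<epsilon> f N (shishkin_mesh \<epsilon> m N) (\<lambda>i. y (shishkin_mesh \<epsilon> m N i)) (N div 4)\<bar>
                 \<le> 6 * (W / N)"
      using G_op_at_transition_le[of \<epsilon> y N C0] by (simp add: W_def shishkin_lambda_def)
    also have "\<dots> \<le> (6 * W + 1) / N" by (simp add: divide_right_mono)
    finally show "\<bar>G_op \<gamma> \<epsilon> f N (shishkin_mesh \<epsilon> m N) (\<lambda>i. y (shishkin_mesh \<epsilon> m N i)) (N div 4)\<bar>
                    \<le> (6 * W + 1) / real N" .
  qed (use \<open>W \<ge> 0\<close> in simp)
qed

end
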